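(* Let $(X,d)$ be an $F$-space with non-decreasing metric $d$ and let $\mathcal{E}(x)=\{e_n(x)\}_{n=0}^\infty$ be a scale on $X$. Then $X_{\mathcal{E}}:=\{x\in X:\mathcal{E}(x)\in c_0\}$ is a closed vector subspace of $X$.
   Context: An $F$-space is a complete metric vector space with translation-invariant metric $d$; $d$ is non-decreasing if $d(\alpha x,0)\le d(x,0)$ for $0\le\alpha\le1$. Write $\|x\|=d(x,0)$. A map $\mathcal{E}:X\to\ell^\infty$, $\mathcal{E}(x)=\{e_n(x)\}_{n=0}^\infty$ with each $e_n:X\to[0,\infty)$, is a scale on $X$ if: (i) there is $C_1>0$ with $C_1\|x\|\ge e_n(x)\ge e_{n+1}(x)$ for all $x\in X$, $n\in\mathbb{N}$, and each $e_n$ is continuous; (ii) there exist a strictly increasing $K:\mathbb{N}\to\mathbb{N}$ and $C_2>0$ with $e_{K(n)}(x+y)\le C_2(e_n(x)+e_n(y))$ for all $x,y\in X$, $n\in\mathbb{N}$; (iii) there is a function $\phi:[0,\infty)\to[0,\infty)$ with $e_n(\lambda x)\le\phi(|\lambda|)e_n(x)$ for all scalars $\lambda$ and $x\in X$, and $e_n(-x)=e_n(x)$ for all $x$. $c_0$ denotes the space of sequences converging to $0$. *)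

theory Defs
  imports "HOL-Analysis.Analysis"
begin

text \<open>An F-space over a scalar field 'k (e.g. real or complex): the type 'a carries a
  complete metric (class complete_space, metric dist), a vector space structure with
  scalar multiplication sm, the metric is translation invariant, and scalar
  multiplication is jointly continuous (so 'a is a metric topological vector space;
  continuity of addition follows from translation invariance).\<close>
definition F_space :: "('k::real_normed_field \<Rightarrow> 'a::{ab_group_add,complete_space} \<Rightarrow> 'a) \<Rightarrow> bool" where
  "F_space sm \<longleftrightarrow>
     vector_space sm \<and>
     (\<forall>x y z::'a. dist (x + z) (y + z) = dist x y) \<and>
     continuous_on UNIV (\<lambda>(c, x). sm c x)"

definition nondecreasing_metric :: "('k::real_normed_field \<Rightarrow> 'a::{ab_group_add,metric_space} \<Rightarrow> 'a) \<Rightarrow> bool" where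
  "nondecreasing_metric sm \<longleftrightarrow>
     (\<forall>(\<alpha>::real) x. 0 \<le> \<alpha> \<and> \<alpha> \<le> 1 \<longrightarrow> dist (sm (of_real \<alpha>) x) 0 \<le> dist x 0)"

definition is_scale :: "('k::real_normed_field \<Rightarrow> 'a::{ab_group_add,metric_space} \<Rightarrow> 'a)
     \<Rightarrow> (nat \<Rightarrow> 'a \<Rightarrow> real) \<Rightarrow> bool" where
  "is_scale sm e \<longleftrightarrow>
     (\<forall>n x. 0 \<le> e n x) \<and>
     (\<exists>C1>0. \<forall>x n. e n x \<le> C1 * dist x 0 \<and> e (Suc n) x \<le> e n x) \<and>
     (\<forall>n. continuous_on UNIV (e n)) \<and>
     (\<exists>K C2. strict_mono (K :: nat \<Rightarrow> nat) \<and> C2 > 0 \<and>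
        (\<forall>x y n. e (K n) (x + y) \<le> C2 * (e n x + e n y))) \<and>
     (\<exists>\<phi>::real \<Rightarrow> real. (\<forall>t\<ge>0. 0 \<le> \<phi> t) \<and>
        (\<forall>c x n. e n (sm c x) \<le> \<phi> (norm c) * e n x)) \<and>
     (\<forall>n x. e n (- x) = e n x)"

definition scale_space :: "(nat \<Rightarrow> 'a \<Rightarrow> real) \<Rightarrow> 'a set" where
  "scale_space e = {x. (\<lambda>n. e n x) \<longlonglongrightarrow> 0}"

end

theory Submission
  imports Defs
begin

text \<open>All three properties come from estimates on a subsequence \<open>e (K n)\<close> only;
  since every sequence \<open>n \<mapsto> e n x\<close> is non-increasing and non-negative,
  convergence of a subsequence to \<open>0\<close> already forces the whole sequence to \<open>0\<close>.
  Sums and scalar multiples are then handled by the quasi-triangle and homogeneity bounds of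
  the scale. For closedness, if \<open>s \<in> X\<^sub>E\<close> is close to \<open>l\<close>, then
  \<open>e (K n) l \<le> C\<^sub>2 (C\<^sub>1 d(l, s) + e n s)\<close>, which is eventually small.\<close>

lemma decseq_tendsto_zero_of_subseq:
  fixes f :: "nat \<Rightarrow> real"
  assumes "decseq f" "\<And>n. 0 \<le> f n" "strict_mono K" "(\<lambda>n. f (K n)) \<longlonglongrightarrow> 0"
  shows "f \<longlonglongrightarrow> 0"
proof -
  obtain L where L: "f \<longlonglongrightarrow> L"
    using decseq_convergent[of f 0] assms(1,2) by blast
  then have "(f \<circ> K) \<longlonglongrightarrow> L"
    using assms(3) by (rule LIMSEQ_subseq_LIMSEQ)
  then have "L = 0"
    using assms(4) by (simp add: o_def LIMSEQ_unique)
  with L show ?thesis by simp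
qed

lemma decseq_tendsto_zero_of_dominated_subseq:
  fixes f g :: "nat \<Rightarrow> real"
  assumes "decseq f" "\<And>n. 0 \<le> f n" "strict_mono K"
    and "\<And>n. f (K n) \<le> g n" "g \<longlonglongrightarrow> 0"
  shows "f \<longlonglongrightarrow> 0"
proof (rule decseq_tendsto_zero_of_subseq[OF assms(1-3)])
  show "(\<lambda>n. f (K n)) \<longlonglongrightarrow> 0"
    by (rule tendsto_sandwich[of "\<lambda>_. 0" _ _ g]) (use assms(2,4,5) in auto)
qed

lemma is_scale_nonneg: "is_scale sm e \<Longrightarrow> 0 \<le> e n x"
  unfolding is_scale_def by blast

lemma is_scale_decseq: "is_scale sm e \<Longrightarrow> decseq (\<lambda>n. e n x)"
  unfolding is_scale_def by (auto intro: decseq_SucI)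

lemma is_scale_bound:
  assumes "is_scale sm e"
  obtains C where "C > 0" "\<And>n x. e n x \<le> C * dist x 0"
proof -
  from assms obtain C where "C > 0" "\<forall>x n. e n x \<le> C * dist x 0 \<and> e (Suc n) x \<le> e n x"
    unfolding is_scale_def by blast
  then show thesis
    by (intro that[of C]) auto
qed

lemma is_scale_quasi_add:
  assumes "is_scale sm e"
  obtains K C where "strict_mono K" "C > 0" "\<And>n x y. e (K n) (x + y) \<le> C * (e n x + e n y)"
proof -
  from assms obtain K C where "strict_mono K" "C > 0" "\<forall>x y n. e (K n) (x + y) \<le> C * (e n x + e n y)"
    unfolding is_scale_def by blast
  then show thesis
    by (intro that[of K C]) auto
qed

lemma is_scale_homogeneous:
  assumes "is_scale sm e"
  obtains \<phi> where "\<And>n c x. e n (sm c x) \<le> \<phi> (norm c) * e n x"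
proof -
  from assms obtain \<phi> where "\<forall>c x n. e n (sm c x) \<le> \<phi> (norm c) * e n x"
    unfolding is_scale_def by blast
  then show thesis
    by (intro that[of \<phi>]) auto
qed

lemma scale_space_zero:
  assumes "is_scale sm e"
  shows "0 \<in> scale_space e"
proof -
  obtain C where "\<And>n x. e n x \<le> C * dist x 0"
    using is_scale_bound[OF assms] by blast
  then have "e n 0 = 0" for n
    using is_scale_nonneg[OF assms, of n 0] by (intro order_antisym) (metis dist_self mult_zero_right)
  then show ?thesis
    by (simp add: scale_space_def)
qed

lemma scale_space_add:
  assumes "is_scale sm e" "x \<in> scale_space e" "y \<in> scale_space e"
  shows "x + y \<in> scale_space e"
proof -
  obtain K C2 where "strict_mono K" "C2 > 0"
    and quasi_add: "\<And>n u v. e (K n) (u + v) \<le> C2 * (e n u + e n v)"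
    using is_scale_quasi_add[OF assms(1)] by blast
  note nonneg = is_scale_nonneg[OF assms(1)] and dec = is_scale_decseq[OF assms(1)]
  have "(\<lambda>n. C2 * (e n x + e n y)) \<longlonglongrightarrow> 0"
    using assms(2,3) tendsto_mult_right_zero tendsto_add_zero
    unfolding scale_space_def by blast
  with dec nonneg \<open>strict_mono K\<close> quasi_add
  have "(\<lambda>n. e n (x + y)) \<longlonglongrightarrow> 0"
    by (rule decseq_tendsto_zero_of_dominated_subseq)
  then show ?thesis
    by (simp add: scale_space_def)
qed

lemma scale_space_scale:
  assumes "is_scale sm e" "x \<in> scale_space e"
  shows "sm c x \<in> scale_space e"
proof -
  obtain \<phi> where homogeneous: "\<And>n c x. e n (sm c x) \<le> \<phi> (norm c) * e n x"
    using is_scale_homogeneous[OF assms(1)] by blast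
  note nonneg = is_scale_nonneg[OF assms(1)] and dec = is_scale_decseq[OF assms(1)]
  have "(\<lambda>n. \<phi> (norm c) * e n x) \<longlonglongrightarrow> 0"
    using assms(2) tendsto_mult_right_zero unfolding scale_space_def by blast
  then have "(\<lambda>n. e n (sm c x)) \<longlonglongrightarrow> 0"
    by (rule decseq_tendsto_zero_of_dominated_subseq[OF dec nonneg strict_mono_id, rotated])
      (simp add: homogeneous)
  then show ?thesis
    by (simp add: scale_space_def)
qed

lemma scale_space_closed:
  fixes e :: "nat \<Rightarrow> 'a::{ab_group_add,metric_space} \<Rightarrow> real"
  assumes "is_scale sm e" and translation_invariant: "\<And>x y z::'a. dist (x + z) (y + z) = dist x y"
  shows "closed (scale_space e)"
proof -
  obtain C1 where "C1 > 0" and bound: "\<And>n x. e n x \<le> C1 * dist x 0"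
    using is_scale_bound[OF assms(1)] by blast
  obtain K C2 where "strict_mono K" "C2 > 0"
    and quasi_add: "\<And>n x y. e (K n) (x + y) \<le> C2 * (e n x + e n y)"
    using is_scale_quasi_add[OF assms(1)] by blast
  note nonneg = is_scale_nonneg[OF assms(1)] and dec = is_scale_decseq[OF assms(1)]
  have "l \<in> scale_space e" if l: "l \<in> closure (scale_space e)" for l
  proof -
    have "eventually (\<lambda>n. e (K n) l < \<epsilon>) sequentially" if "\<epsilon> > 0" for \<epsilon>
    proof -
      define \<delta> where "\<delta> = \<epsilon> / (2 * C2)"
      have "\<delta> > 0" "\<delta> / C1 > 0"
        using \<open>\<epsilon> > 0\<close> \<open>C1 > 0\<close> \<open>C2 > 0\<close> by (simp_all add: \<delta>_def)
      then obtain s where s: "s \<in> scale_space e" and close: "dist s l < \<delta> / C1"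
        using l unfolding closure_approachable by blast
      have "dist (l - s) 0 = dist s l"
        using translation_invariant[of "l - s" s 0] by (simp add: dist_commute)
      then have small_diff: "e n (l - s) < \<delta>" for n
        using bound[of n "l - s"] close \<open>C1 > 0\<close> by (simp add: pos_less_divide_eq mult.commute)
      have "eventually (\<lambda>n. e n s < \<delta>) sequentially"
        using s \<open>\<delta> > 0\<close> unfolding scale_space_def by (simp add: order_tendstoD)
      then show ?thesis
      proof eventually_elim
        case (elim n)
        have "e (K n) l \<le> C2 * (e n (l - s) + e n s)"
          using quasi_add[of n "l - s" s] by simp
        also have "\<dots> < C2 * (2 * \<delta>)"
          using elim small_diff[of n] \<open>C2 > 0\<close> by simp
        also have "\<dots> = \<epsilon>"
          using \<open>C2 > 0\<close> by (simp add: \<delta>_def)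
        finally show ?case .
      qed
    qed
    moreover have "eventually (\<lambda>n. a < e (K n) l) sequentially" if "a < 0" for a
      by (intro always_eventually allI less_le_trans[OF that nonneg])
    ultimately have "(\<lambda>n. e (K n) l) \<longlonglongrightarrow> 0"
      by (rule order_tendstoI[rotated])
    with dec nonneg \<open>strict_mono K\<close> have "(\<lambda>n. e n l) \<longlonglongrightarrow> 0"
      by (rule decseq_tendsto_zero_of_subseq)
    then show ?thesis
      by (simp add: scale_space_def)
  qed
  then show ?thesis
    using closure_subset_eq by blast
qed

theorem mainTheorem6:
  fixes sm :: "'k::real_normed_field \<Rightarrow> 'a::{ab_group_add,complete_space} \<Rightarrow> 'a"
    and e :: "nat \<Rightarrow> 'a \<Rightarrow> real"
  assumes "F_space sm"
    and "nondecreasing_metric sm"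
    and "is_scale sm e"
  shows "module.subspace sm (scale_space e) \<and> closed (scale_space e)"
proof
  have "module sm"
    using assms(1) by (simp add: F_space_def module_iff_vector_space)
  then show "module.subspace sm (scale_space e)"
    using scale_space_zero[OF assms(3)] scale_space_add[OF assms(3)]
      scale_space_scale[OF assms(3)]
    by (simp add: module.subspace_def)
  have "\<And>x y z::'a. dist (x + z) (y + z) = dist x y"
    using assms(1) by (simp add: F_space_def)
  then show "closed (scale_space e)"
    by (rule scale_space_closed[OF assms(3)])
qed

end
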